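(* Assume the ABC Conjecture over $\mathbb{Z}$. There is an absolute constant $c>0$ such that the following holds. Let $N>0$ be an integer, let $E_N$ be the elliptic curve $y^2=x^3-Nx$ over $\mathbb{Q}$, and let $P\in E_N(\mathbb{Q})$ be a non-torsion point. If $L(2P)\le 1$, then $$\log|x(P)|\le c\log N\quad\text{and}\quad \log|x(2P)|\le c\log N .$$
   Context: ABC Conjecture over $\mathbb{Z}$: for every $\epsilon>0$ there is a constant $K_\epsilon$ such that for all coprime integers $a,b,c$ with $a+b=c$ one has $\max(|a|,|b|,|c|)\le K_\epsilon\,\mathrm{rad}(abc)^{1+\epsilon}$, where $\mathrm{rad}(m)$ is the product of the distinct primes dividing $m$. The constant $c$ may depend on the constants $K_\epsilon$ of the ABC Conjecture, but not on $N$ or $P$. For a rational point $Q\ne O$ on an elliptic curve in Weierstrass form over $\mathbb{Q}$, the length $L(Q)$ is the number of distinct primes $p$ with $|x(Q)|_p>1$, where $|\cdot|_p$ is the usual $p$-adic absolute value. Equivalently, write $x(Q)=A_Q/B_Q^2$ in lowest terms; then $L(Q)$ is the number of distinct prime divisors of $B_Q$. *)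

theory Defs
  imports Complex_Main "HOL-Computational_Algebra.Primes"
begin

text \<open>Radical: product of the distinct primes dividing m (rad 0 = 1 by convention).\<close>
definition rad :: "int \<Rightarrow> int" where
  "rad m = (\<Prod>p\<in>prime_factors m. p)"

definition ABC_conjecture :: bool where
  "ABC_conjecture \<longleftrightarrow>
     (\<forall>\<epsilon>::real. \<epsilon> > 0 \<longrightarrow> (\<exists>K::real. \<forall>a b c :: int.
        coprime a b \<and> coprime b c \<and> coprime a c \<and> a + b = c \<longrightarrow>
        real_of_int (max \<bar>a\<bar> (max \<bar>b\<bar> \<bar>c\<bar>)) \<le> K * (real_of_int (rad (a * b * c))) powr (1 + \<epsilon>)))"

datatype ecpt = Inf | Pt rat rat

fun on_curve :: "int \<Rightarrow> ecpt \<Rightarrow> bool" where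
  "on_curve N Inf = True"
| "on_curve N (Pt x y) = (y^2 = x^3 - of_int N * x)"

text \<open>Chord-tangent group law on E_N (Weierstrass form with a = -N, b = 0).\<close>
fun ec_add :: "int \<Rightarrow> ecpt \<Rightarrow> ecpt \<Rightarrow> ecpt" where
  "ec_add N Inf Q = Q"
| "ec_add N (Pt x1 y1) Inf = Pt x1 y1"
| "ec_add N (Pt x1 y1) (Pt x2 y2) =
     (if x1 = x2 \<and> y1 = - y2 then Inf
      else let l = (if x1 = x2 then (3 * x1^2 - of_int N) / (2 * y1)
                    else (y2 - y1) / (x2 - x1));
               x3 = l^2 - x1 - x2
           in Pt x3 (l * (x1 - x3) - y1))"

definition ec_mult :: "int \<Rightarrow> nat \<Rightarrow> ecpt \<Rightarrow> ecpt" where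
  "ec_mult N n P = (ec_add N P ^^ n) Inf"

definition torsion :: "int \<Rightarrow> ecpt \<Rightarrow> bool" where
  "torsion N P \<longleftrightarrow> (\<exists>n::nat. n \<ge> 1 \<and> ec_mult N n P = Inf)"

fun xcoord :: "ecpt \<Rightarrow> rat" where
  "xcoord Inf = 0"
| "xcoord (Pt x y) = x"

text \<open>Length L(Q): number of distinct primes p with |x(Q)|_p > 1, i.e. the number of
  distinct primes dividing the (reduced) denominator of x(Q).\<close>
definition ec_length :: "ecpt \<Rightarrow> nat" where
  "ec_length Q = card (prime_factors (snd (quotient_of (xcoord Q))))"

end

theory Submission
  imports Defs "HOL-Computational_Algebra.Nth_Powers"
begin

(*
  Let P = (x, y) be a non-torsion point on E_N : y^2 = x^3 - N x and write x = a/d in lowest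
  terms, d > 0, and W = a (a^2 - N d^2).  Clearing denominators in the curve equation gives
  y^2 d^3 = W, so W d is a square; the duplication formula gives x(2P) * 4dW = (a^2 + N d^2)^2.
  Every prime dividing d, and every prime dividing W but not 2N, divides 4dW but not
  (a^2 + N d^2)^2, hence divides the denominator of x(2P).  So L(2P) <= 1 leaves at most one
  such exceptional prime p.

  ABC with exponent 3/2, applied to (a^2 - N d^2) + N d^2 = a^2, bounds
  M = max(|a^2 - N d^2|, N d^2, a^2) by N K (2 N p)^(3/2): the gcd of the summands divides N
  and the radical divides 2 N p.  Squareness of W d forces p^2 <= M, and solving the resulting
  inequality gives M <= 64 K^4 N^10.  Since |x(P)| <= a^2 and |x(2P)| <= (a^2 + N d^2)^2 <= 4 M^2,
  both logarithms are O(log N) as soon as N >= 2.  For N = 1 (where log N = 0) the same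
  arithmetic data is shown to be impossible by an elementary argument with squares.
*)

section \<open>The radical\<close>

lemma rad_ge_1: "rad m \<ge> 1"
  unfolding rad_def
  by (rule prod_ge_1) (auto dest!: in_prime_factors_imp_prime intro: less_imp_le prime_gt_1_int)

lemma rad_mono:
  assumes "y \<noteq> 0" "prime_factors x \<subseteq> prime_factors y"
  shows "rad x \<le> rad y"
proof -
  have split: "rad y = rad x * (\<Prod>p\<in>prime_factors y - prime_factors x. p)"
    unfolding rad_def using prod.subset_diff[OF assms(2)] by (simp add: mult.commute)
  have "(\<Prod>p\<in>prime_factors y - prime_factors x. p) \<ge> 1"
    by (rule prod_ge_1) (auto dest!: in_prime_factors_imp_prime intro: less_imp_le prime_gt_1_int)
  then have "rad x * 1 \<le> rad y"
    unfolding split using rad_ge_1[of x] by (intro mult_left_mono) auto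
  then show ?thesis by simp
qed

lemma rad_le_abs:
  assumes "y \<noteq> 0" shows "rad y \<le> \<bar>y\<bar>"
proof -
  have "rad y \<le> (\<Prod>p \<in> prime_factors y. p ^ multiplicity p y)"
    unfolding rad_def
  proof (rule prod_mono)
    fix p assume p: "p \<in> prime_factors y"
    then have "prime p" "multiplicity p y \<ge> 1"
      using assms by (auto simp: prime_factors_multiplicity)
    then have "p ^ 1 \<le> p ^ multiplicity p y"
      by (intro power_increasing) (auto dest: prime_gt_1_int)
    then show "0 \<le> p \<and> p \<le> p ^ multiplicity p y"
      using \<open>prime p\<close> by (auto dest: prime_gt_1_int)
  qed
  also have "\<dots> = \<bar>y\<bar>" using prod_prime_factors[OF assms] by simp
  finally show ?thesis .
qed

section \<open>ABC with a gcd weight\<close>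

definition abc_gcd_constant :: "real \<Rightarrow> bool" where
  "abc_gcd_constant K \<longleftrightarrow> K \<ge> 1 \<and>
     (\<forall>a b c :: int. a + b = c \<longrightarrow> a \<noteq> 0 \<longrightarrow> b \<noteq> 0 \<longrightarrow> c \<noteq> 0 \<longrightarrow>
        real_of_int (max \<bar>a\<bar> (max \<bar>b\<bar> \<bar>c\<bar>))
          \<le> real_of_int (gcd a b) * K * real_of_int (rad (a * b * c)) powr (3/2))"

lemma abc_gcd_constantD:
  assumes "abc_gcd_constant K" "a + b = c" "a \<noteq> 0" "b \<noteq> 0" "c \<noteq> 0"
  shows "real_of_int (max \<bar>a\<bar> (max \<bar>b\<bar> \<bar>c\<bar>))
           \<le> real_of_int (gcd a b) * K * real_of_int (rad (a * b * c)) powr (3/2)"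
  using assms unfolding abc_gcd_constant_def by blast

lemma abc_gcd_constant_ge_1: "abc_gcd_constant K \<Longrightarrow> K \<ge> 1"
  unfolding abc_gcd_constant_def by simp

text \<open>Dividing a + b = c by g = gcd a b yields a coprime triple with no larger radical.\<close>
lemma abc_gcd_constant_exists:
  assumes "ABC_conjecture"
  obtains K where "abc_gcd_constant K"
proof -
  obtain K0 :: real where K0: "\<And>a b c :: int. coprime a b \<Longrightarrow> coprime b c \<Longrightarrow> coprime a c \<Longrightarrow>
      a + b = c \<Longrightarrow> real_of_int (max \<bar>a\<bar> (max \<bar>b\<bar> \<bar>c\<bar>)) \<le> K0 * real_of_int (rad (a * b * c)) powr (3/2)"
    using assms[unfolded ABC_conjecture_def, rule_format, of "1/2"] by auto
  define K where "K = max K0 1"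
  have "real_of_int (max \<bar>a\<bar> (max \<bar>b\<bar> \<bar>c\<bar>))
          \<le> real_of_int (gcd a b) * K * real_of_int (rad (a * b * c)) powr (3/2)"
    if abc: "a + b = c" "a \<noteq> 0" "b \<noteq> 0" "c \<noteq> 0" for a b c :: int
  proof -
    define g where "g = gcd a b"
    define a' b' where "a' = a div g" and "b' = b div g"
    have g: "g > 0" using abc(2) unfolding g_def by simp
    have a: "a = g * a'" and b: "b = g * b'"
      unfolding a'_def b'_def g_def by simp_all
    have c: "c = g * (a' + b')" using abc(1) a b by (simp add: distrib_left)
    have cop_ab: "coprime a' b'"
      unfolding a'_def b'_def g_def using abc by (intro div_gcd_coprime) auto
    have "coprime b' (a' + b')"
      using cop_ab gcd_add_mult[of b' 1 a'] by (simp add: coprime_iff_gcd_eq_1 gcd.commute add.commute)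
    moreover have "coprime a' (a' + b')"
      using cop_ab gcd_add_mult[of a' 1 b'] by (simp add: coprime_iff_gcd_eq_1)
    ultimately have
H: "real_of_int (max \<bar>a'\<bar> (max \<bar>b'\<bar> \<bar>a' + b'\<bar>))
                    \<le> K0 * real_of_int (rad (a' * b' * (a' + b'))) powr (3/2)"
      using K0 cop_ab by blast
    have "rad (a' * b' * (a' + b')) \<le> rad (a * b * c)"
    proof (rule rad_mono)
      show "a * b * c \<noteq> 0" using abc by simp
      show "prime_factors (a' * b' * (a' + b')) \<subseteq> prime_factors (a * b * c)"
        using abc by (intro dvd_prime_factors) (auto simp: a b c mult_dvd_mono)
    qed
    then have "real_of_int (rad (a' * b' * (a' + b'))) powr (3/2) \<le> real_of_int (rad (a * b * c)) powr (3/2)"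
      using rad_ge_1[of "a' * b' * (a' + b')"] by (intro powr_mono2) auto
    then have "K0 * real_of_int (rad (a' * b' * (a' + b'))) powr (3/2)
                 \<le> K * real_of_int (rad (a * b * c)) powr (3/2)"
      unfolding K_def by (intro mult_mono) auto
    with H have H': "real_of_int (max \<bar>a'\<bar> (max \<bar>b'\<bar> \<bar>a' + b'\<bar>)) \<le> K * real_of_int (rad (a * b * c)) powr (3/2)"
      by linarith
    have "max \<bar>a\<bar> (max \<bar>b\<bar> \<bar>c\<bar>) = g * max \<bar>a'\<bar> (max \<bar>b'\<bar> \<bar>a' + b'\<bar>)"
      using g by (simp add: a b c abs_mult max_mult_distrib_left)
    then have "real_of_int (max \<bar>a\<bar> (max \<bar>b\<bar> \<bar>c\<bar>)) = real_of_int g * real_of_int (max \<bar>a'\<bar> (max \<bar>b'\<bar> \<bar>a' + b'\<bar>))"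
      by simp
    also have "\<dots> \<le> real_of_int g * (K * real_of_int (rad (a * b * c)) powr (3/2))"
      using H' g by (intro mult_left_mono) auto
    finally show ?thesis unfolding g_def by (simp add: mult.assoc)
  qed
  then have "abc_gcd_constant K"
    unfolding abc_gcd_constant_def K_def by auto
  then show ?thesis using that by blast
qed

lemma self_improving_bound:
  fixes M p N K :: real
  assumes M1: "M \<ge> 1" and p1: "p \<ge> 1" and p2: "p^2 \<le> M" and N1: "N \<ge> 1" and K1: "K \<ge> 1"
    and H: "M \<le> N * K * (2*N*p) powr (3/2)"
  shows "M \<le> 64 * K^4 * N^10"
proof -
  have "p powr (3/2) = (p powr 2) powr (3/4)" by (simp add: powr_powr)
  also have "\<dots> = (p^2) powr (3/4)" using p1 by simp
  also have "\<dots> \<le> M powr (3/4)" using p2 p1 by (intro powr_mono2) auto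
  finally have "(2*N*p) powr (3/2) \<le> (2*N) powr (3/2) * M powr (3/4)"
    using N1 p1 by (simp add: powr_mult)
  then have H2: "M \<le> (N * K * (2*N) powr (3/2)) * M powr (3/4)"
    using H N1 K1 by (smt (verit) mult_left_mono mult.assoc mult_nonneg_nonneg)
  have "M powr (1/4) * M powr (3/4) = M" using M1 by (simp add: powr_add[symmetric])
  with H2 have "M powr (1/4) * M powr (3/4) \<le> (N * K * (2*N) powr (3/2)) * M powr (3/4)"
    by simp
  moreover have "M powr (3/4) > 0" using M1 by simp
  ultimately have A: "M powr (1/4) \<le> N * K * (2*N) powr (3/2)" by simp
  have "M = (M powr (1/4)) ^ 4" using M1 by (simp add: powr_power)
  also have "\<dots> \<le> (N * K * (2*N) powr (3/2)) ^ 4" using A by (intro power_mono) auto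
  also have "\<dots> = N^4 * K^4 * ((2*N) powr (3/2)) ^ 4" by (simp add: power_mult_distrib)
  also have "((2*N) powr (3/2)) ^ 4 = (2*N) ^ 6"
  proof -
    have "((2*N) powr (3/2)) ^ 4 = (2*N) powr (of_nat 4 * (3/2))"
      using N1 by (simp only: powr_power)
    also have "\<dots> = (2*N) ^ 6" using N1 by simp
    finally show ?thesis .
  qed
  also have "N^4 * K^4 * (2*N)^6 = 64 * K^4 * N^10" by (simp add: power_mult_distrib)
  finally show ?thesis .
qed

lemma abs_le_square_int: "\<bar>a\<bar> \<le> (a::int)^2"
proof (cases "a = 0")
  case False
  then have "\<bar>a\<bar> * 1 \<le> \<bar>a\<bar> * \<bar>a\<bar>" by (intro mult_left_mono) auto
  then show ?thesis by (simp add: power2_eq_square abs_mult_self_eq)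
qed simp

lemma coprime_if_no_common_prime:
  fixes x y :: int
  assumes "\<And>p. prime p \<Longrightarrow> p dvd x \<Longrightarrow> p dvd y \<Longrightarrow> False"
  shows "coprime x y"
proof (rule ccontr)
  assume "\<not> coprime x y"
  then have nu: "\<not> is_unit (gcd x y)" by (simp add: coprime_iff_gcd_eq_1)
  moreover have "gcd x y \<noteq> 0" using assms[of 2] by auto
  ultimately obtain p where "p dvd gcd x y" "prime p" using prime_divisor_exists by blast
  then show False using assms by (meson dvd_trans gcd_dvd1 gcd_dvd2)
qed

lemma coprime_no_common_prime:
  fixes x y p :: int
  assumes "coprime x y" "prime p" "p dvd x" "p dvd y" shows False
  using assms coprime_common_divisor not_prime_unit by blast

lemma abs_eq_1_if_no_prime_factor:
  fixes x :: int assumes "x \<noteq> 0" "\<And>q. prime q \<Longrightarrow> q dvd x \<Longrightarrow> False" shows "\<bar>x\<bar> = 1"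
  using assms prime_divisor_exists[OF assms(1)] by fastforce

lemma coprime_factor_of_square:
  fixes u v C :: int
  assumes u: "u > 0" and v: "v > 0" and cop: "coprime u v" and sq: "u * v = C^2"
  shows "\<exists>t. v = t^2"
proof -
  have cop': "coprime (nat u) (nat v)" using cop u v coprime_int_iff[of "nat u" "nat v"] by simp
  have "int (nat u * nat v) = int ((nat \<bar>C\<bar>)^2)" using sq u v by simp
  then have "is_nth_power 2 (nat u * nat v)" by (intro is_nth_powerI) (simp only: of_nat_eq_iff)
  then have "is_nth_power 2 (nat v)" using is_nth_power_mult_coprime_natD(2)[OF cop'] u v by simp
  then obtain t where "nat v = t^2" by (elim is_nth_powerE)
  then have "v = (int t)^2" using v by (metis int_nat_eq of_nat_power less_imp_le nat_0_le)
  then show ?thesis by blast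
qed

lemma square_diff_one:
  fixes x y :: int assumes "x^2 - y^2 = 1" shows "y = 0"
proof -
  have "\<bar>y\<bar> < \<bar>x\<bar>" using assms abs_le_square_iff[of x y] by linarith
  then have "(\<bar>y\<bar> + 1)^2 \<le> \<bar>x\<bar>^2" by (intro power_mono) auto
  then have "y^2 + 2*\<bar>y\<bar> + 1 \<le> x^2" by (simp add: power2_eq_square algebra_simps abs_mult_self_eq)
  then show ?thesis using assms by simp
qed

lemma rat_square_of_int_imp_int:
  fixes r :: rat assumes "r^2 = of_int n" shows "\<exists>m. r = of_int m"
proof -
  obtain u v where q: "quotient_of r = (u, v)" by (cases "quotient_of r")
  have v: "v > 0" and cop: "coprime u v" and r: "r = of_int u / of_int v"
    using quotient_of_denom_pos[OF q] quotient_of_coprime[OF q] quotient_of_div[OF q] by auto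
  have "of_int u ^ 2 = (of_int n * of_int v ^ 2 :: rat)"
    using assms v by (simp add: r power_divide divide_eq_eq)
  then have "u^2 = n * v^2" by (metis of_int_eq_iff of_int_mult of_int_power)
  then have "v^2 dvd u^2" by simp
  moreover have "coprime (v^2) (u^2)" using cop by (simp add: coprime_commute)
  ultimately have "\<bar>v^2\<bar> = 1" using coprime_common_divisor_int[of "v^2" "u^2" "v^2"] by simp
  then have "v = 1" using v by (simp add: power2_eq_1_iff)
  then show ?thesis using r by auto
qed

section \<open>The ABC height bound\<close>

text \<open>For x = a/d in lowest terms on E_N, the primes that necessarily divide the denominator
  of x(2P): those of d, and those of W = a(a^2 - N d^2) not dividing 2N.\<close>
definition exceptional_primes :: "int \<Rightarrow> int \<Rightarrow> int \<Rightarrow> int set" where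
  "exceptional_primes N a d =
     {q. prime q \<and> (q dvd d \<or> (q dvd a * (a^2 - N*d^2) \<and> \<not> q dvd 2*N))}"

text \<open>An exceptional prime p not dividing 2N, if it is the only exceptional prime, is small:
  either p divides d, or d = 1 and p^2 divides the square W, hence divides a or a^2 - N.\<close>
lemma unique_exceptional_prime_sq_le:
  fixes N a d C p :: int
  assumes N: "N > 0" and d: "d > 0" and a: "a \<noteq> 0" and b: "a^2 - N*d^2 \<noteq> 0"
    and sq: "a * (a^2 - N*d^2) * d = C^2"
    and pE: "p \<in> exceptional_primes N a d" and p2N: "\<not> p dvd 2*N"
    and unique: "\<forall>q\<in>exceptional_primes N a d. q = p"
  shows "p^2 \<le> max \<bar>a^2 - N*d^2\<bar> (max \<bar>N*d^2\<bar> \<bar>a^2\<bar>)"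
proof (cases "p dvd d")
  case True
  then have "p^2 \<le> d^2"
    using d pE by (intro power_mono) (auto simp: exceptional_primes_def zdvd_imp_le prime_ge_0_int)
  also have "\<dots> \<le> N*d^2" using N mult_right_mono[of 1 N "d^2"] by simp
  finally show ?thesis by simp
next
  case False
  have p: "prime p" "p dvd a * (a^2 - N*d^2)" using pE False by (auto simp: exceptional_primes_def)
  have d1: "d = 1"
  proof (rule ccontr)
    assume "d \<noteq> 1"
    then obtain q where "q dvd d" "prime q" using prime_divisor_exists[of d] d by auto
    then have "q = p" using unique by (auto simp: exceptional_primes_def)
    then show False using \<open>q dvd d\<close> False by simp
  qed
  have "p dvd C" using p sq d1 prime_dvd_power_iff[of p 2 C] by simp
  then have p2W: "p^2 dvd a * (a^2 - N)" using sq d1 by simp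
  have pN: "\<not> p dvd N" using p2N by (metis dvd_mult)
  show ?thesis
  proof (cases "p dvd a")
    case True
    have "\<not> p dvd a^2 - N"
      using True pN dvd_diff[of p "a^2" "a^2 - N"] by (auto simp: power2_eq_square)
    then have "p^2 dvd a"
      using prime_power_dvd_multD[OF prime_imp_prime_elem[OF p(1)], of 2 "a^2 - N" a] p2W
      by (simp add: mult.commute)
    then have "p^2 \<le> \<bar>a\<bar>" using a by (metis dvd_abs_iff zdvd_imp_le zero_less_abs_iff)
    then show ?thesis using abs_le_square_int[of a] by simp
  next
    case False
    then have "p^2 dvd a^2 - N"
      using prime_power_dvd_multD[OF prime_imp_prime_elem[OF p(1)], of 2 a "a^2 - N"] p2W by simp
    then have "p^2 \<le> \<bar>a^2 - N\<bar>" using b d1 by (metis dvd_abs_iff zdvd_imp_le zero_less_abs_iff mult_1_right power_one)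
    then show ?thesis using d1 by simp
  qed
qed

lemma rad_triple_le:
  fixes N a d p :: int
  assumes N: "N > 0" and d: "d > 0" and p: "p \<ge> 1" and a: "a \<noteq> 0" and b: "a^2 - N*d^2 \<noteq> 0"
    and unique: "\<forall>q\<in>exceptional_primes N a d. \<not> q dvd 2*N \<longrightarrow> q = p"
  shows "rad ((a^2 - N*d^2) * (N*d^2) * a^2) \<le> 2*N*p"
proof -
  have "prime_factors ((a^2 - N*d^2) * (N*d^2) * a^2) \<subseteq> prime_factors (2*N*p)"
  proof
    fix q assume "q \<in> prime_factors ((a^2 - N*d^2) * (N*d^2) * a^2)"
    then have q: "prime q" "q dvd (a^2 - N*d^2) * (N*d^2) * a^2" by auto
    have "q dvd 2*N*p"
    proof (cases "q dvd 2*N")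
      case False
      then have "\<not> q dvd N" by (metis dvd_mult)
      with q have "q dvd a^2 - N*d^2 \<or> q dvd d \<or> q dvd a"
        by (metis prime_dvd_multD prime_dvd_power_iff zero_less_numeral)
      then have "q \<in> exceptional_primes N a d"
        using q(1) False by (auto simp: exceptional_primes_def)
      then show ?thesis using unique False by simp
    qed simp
    then show "q \<in> prime_factors (2*N*p)" using q N p by (auto intro: prime_factorsI)
  qed
  then have "rad ((a^2 - N*d^2) * (N*d^2) * a^2) \<le> rad (2*N*p)"
    using N p by (intro rad_mono) auto
  also have "\<dots> \<le> 2*N*p" using rad_le_abs[of "2*N*p"] N p by simp
  finally show ?thesis .
qed

lemma gcd_triple_dvd:
  fixes N a d :: int
  assumes "coprime a d"
  shows "gcd (a^2 - N*d^2) (N*d^2) dvd N"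
proof -
  define h where "h = gcd (a^2 - N*d^2) (N*d^2)"
  have "h dvd (a^2 - N*d^2) + N*d^2" unfolding h_def by (intro dvd_add) auto
  then have "h dvd a^2" by simp
  moreover have "coprime (a^2) (d^2)" using assms by simp
  ultimately have "coprime h (d^2)" using coprime_divisors[OF _ dvd_refl] by blast
  moreover have "h dvd N*d^2" unfolding h_def by simp
  ultimately show ?thesis unfolding h_def using coprime_dvd_mult_left_iff by blast
qed

lemma abc_height_bound:
  fixes N a d C :: int and K :: real
  assumes K: "abc_gcd_constant K" and N: "N > 0" and d: "d > 0" and cop: "coprime a d"
    and W: "a * (a^2 - N*d^2) \<noteq> 0" and sq: "a * (a^2 - N*d^2) * d = C^2"
    and unique: "\<forall>p\<in>exceptional_primes N a d. \<forall>q\<in>exceptional_primes N a d. p = q"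
  shows "real_of_int (max \<bar>a^2 - N*d^2\<bar> (max \<bar>N*d^2\<bar> \<bar>a^2\<bar>)) \<le> 64 * K^4 * real_of_int N ^ 10"
proof -
  define M where "M = max \<bar>a^2 - N*d^2\<bar> (max \<bar>N*d^2\<bar> \<bar>a^2\<bar>)"
  have a: "a \<noteq> 0" and b: "a^2 - N*d^2 \<noteq> 0" using W by auto
  have K1: "K \<ge> 1" using abc_gcd_constant_ge_1[OF K] .
  have M1: "M \<ge> 1" using a abs_le_square_int[of a] unfolding M_def by linarith
  obtain p where p1: "p \<ge> 1" and pM: "p^2 \<le> M"
    and p_only: "\<forall>q\<in>exceptional_primes N a d. \<not> q dvd 2*N \<longrightarrow> q = p"
  proof (cases "\<exists>q\<in>exceptional_primes N a d. \<not> q dvd 2*N")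
    case True
    then obtain p where pE: "p \<in> exceptional_primes N a d" and p2N: "\<not> p dvd 2*N" by blast
    have "p^2 \<le> M"
      using unique_exceptional_prime_sq_le[OF N d a b sq pE p2N] unique pE unfolding M_def by blast
    moreover have "p \<ge> 1" using pE by (auto simp: exceptional_primes_def dest: prime_gt_1_int)
    ultimately show ?thesis using that unique pE by blast
  next
    case False
    then show ?thesis using that[of 1] M1 by auto
  qed
  have "real_of_int M
          \<le> real_of_int (gcd (a^2 - N*d^2) (N*d^2)) * K * real_of_int (rad ((a^2 - N*d^2) * (N*d^2) * a^2)) powr (3/2)"
    using abc_gcd_constantD[OF K, of "a^2 - N*d^2" "N*d^2" "a^2"] a b N d unfolding M_def by simp
  also have "\<dots> \<le> real_of_int N * K * real_of_int (2*N*p) powr (3/2)"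
  proof (intro mult_mono powr_mono2)
    show "real_of_int (gcd (a^2 - N*d^2) (N*d^2)) \<le> real_of_int N"
      using gcd_triple_dvd[OF cop, of N] N by (simp add: zdvd_imp_le)
    show "real_of_int (rad ((a^2 - N*d^2) * (N*d^2) * a^2)) \<le> real_of_int (2*N*p)"
      using rad_triple_le[OF N d p1 a b p_only] by (simp only: of_int_le_iff)
  qed (use K1 N rad_ge_1[of "(a^2 - N*d^2) * (N*d^2) * a^2"] in auto)
  finally have H: "real_of_int M \<le> real_of_int N * K * (2 * real_of_int N * real_of_int p) powr (3/2)"
    by simp
  have "real_of_int p ^ 2 \<le> real_of_int M" using pM by (simp only: of_int_power[symmetric] of_int_le_iff)
  from self_improving_bound[OF _ _ this _ K1 H] show ?thesis
    unfolding M_def[symmetric] using M1 p1 N by simp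
qed

section \<open>The case N = 1\<close>

text \<open>d shares no prime with W = a(a^2 - N d^2): such a prime would divide a^2 but not a.\<close>
lemma coprime_denominator_W:
  fixes N a d :: int
  assumes "coprime a d"
  shows "coprime d (a * (a^2 - N*d^2))"
proof (rule coprime_if_no_common_prime)
  fix p :: int assume p: "prime p" "p dvd d" "p dvd a * (a^2 - N*d^2)"
  have pa: "\<not> p dvd a" using assms p coprime_no_common_prime by blast
  then have "p dvd a^2 - N*d^2" using p prime_dvd_multD by blast
  moreover have "p dvd N*d^2" using p(2) by (simp add: power2_eq_square)
  ultimately have "p dvd (a^2 - N*d^2) + N*d^2" by (rule dvd_add)
  then show False using pa p(1) prime_dvd_power_iff[of p 2 a] by simp
qed

text \<open>Since W d is a square and gcd(d, W) = 1, W itself is a square.\<close>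
lemma W_is_square:
  fixes N a d C :: int
  assumes d: "d > 0" and cop: "coprime a d" and W: "a * (a^2 - N*d^2) \<noteq> 0"
    and sq: "a * (a^2 - N*d^2) * d = C^2"
  shows "\<exists>t. a * (a^2 - N*d^2) = t^2"
proof -
  have "a * (a^2 - N*d^2) * d \<ge> 0" using sq by simp
  then have "a * (a^2 - N*d^2) \<ge> 0" using d by (meson mult_neg_pos not_le)
  then have "a * (a^2 - N*d^2) > 0" using W by linarith
  moreover have "d * (a * (a^2 - N*d^2)) = C^2" using sq by (simp add: mult.commute)
  ultimately show ?thesis using coprime_factor_of_square[OF d] coprime_denominator_W[OF cop] by blast
qed

text \<open>a(a^2 - 1) is never a nonzero square: a and a^2 - 1 would both be squares.\<close>
lemma cube_minus_self_square:
  fixes a t :: int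
  assumes sq: "a * (a^2 - 1) = t^2"
  shows "t = 0"
proof (rule ccontr)
  assume "t \<noteq> 0"
  then have pos: "a * (a^2 - 1) > 0" using sq by simp
  have "a^2 \<ge> 1 \<or> a = 0" using abs_le_square_int[of a] by linarith
  then have a: "a > 0" and b: "a^2 - 1 > 0" using pos by (auto simp: zero_less_mult_iff)
  have "coprime a (a^2 - 1)"
    using dvd_diff[of _ "a^2" "a^2 - 1"]
    by (intro coprime_if_no_common_prime) (auto simp: power2_eq_square not_prime_unit)
  then obtain s where "a^2 - 1 = s^2" using coprime_factor_of_square[OF a b] sq by blast
  then have "s = 0" using square_diff_one[of a s] by simp
  then show False using b \<open>a^2 - 1 = s^2\<close> by simp
qed

lemma coprime_only_two_divides:
  fixes u v :: int
  assumes "u \<noteq> 0" "v \<noteq> 0" "coprime u v"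
    and two: "\<And>q. prime q \<Longrightarrow> q dvd u * v \<Longrightarrow> q = 2"
  shows "\<bar>u\<bar> = 1 \<or> \<bar>v\<bar> = 1"
proof (rule ccontr)
  assume "\<not> (\<bar>u\<bar> = 1 \<or> \<bar>v\<bar> = 1)"
  then obtain q1 q2 where "prime q1" "q1 dvd u" "prime q2" "q2 dvd v"
    using abs_eq_1_if_no_prime_factor assms(1,2) by metis
  moreover have "q1 = 2" "q2 = 2" using two calculation by (meson dvd_mult dvd_mult2)+
  ultimately show False using coprime_no_common_prime[OF assms(3)] by blast
qed

text \<open>If d = 1 then a(a^2 - 1) is a nonzero square; if d > 1 then
  a prime of d is the only exceptional prime, so W is a power of 2 and one of its coprime
  factors a, a^2 - d^2 is a unit, which again leads to a difference of squares equal to 1.\<close>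
lemma no_exceptional_data_N1:
  fixes a d C :: int
  assumes d: "d > 0" and cop: "coprime a d" and W: "a * (a^2 - d^2) \<noteq> 0"
    and sq: "a * (a^2 - d^2) * d = C^2"
    and unique: "\<forall>p\<in>exceptional_primes 1 a d. \<forall>q\<in>exceptional_primes 1 a d. p = q"
  shows False
proof -
  obtain t where t: "a * (a^2 - d^2) = t^2"
    using W_is_square[of d a 1 C] assms by auto
  show False
  proof (cases "d = 1")
    case True
    then show False using cube_minus_self_square[of a t] t W by simp
  next
    case False
    then obtain p where p: "prime p" "p dvd d" using prime_divisor_exists[of d] d by auto
    have only_two: "q = 2" if q: "prime q" "q dvd a * (a^2 - d^2)" for q
    proof (rule ccontr)
      assume "q \<noteq> 2"
      then have "\<not> q dvd 2" using q(1) primes_dvd_imp_eq[of q 2] by auto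
      then have "q = p" using unique p q by (auto simp: exceptional_primes_def)
      moreover have "coprime d (a * (a^2 - d^2))" using coprime_denominator_W[OF cop, of 1] by simp
      ultimately show False using coprime_no_common_prime p q by blast
    qed
    have "coprime a (a^2 - d^2)"
    proof (rule coprime_if_no_common_prime)
      fix q :: int assume q: "prime q" "q dvd a" "q dvd a^2 - d^2"
      have "q dvd a^2" using q(2) by (simp add: power2_eq_square)
      then have "q dvd a^2 - (a^2 - d^2)" using q(3) by (rule dvd_diff)
      then have "q dvd d" using q(1) prime_dvd_power_iff[of q 2 d] by simp
      then show False using coprime_no_common_prime[OF cop q(1,2)] by simp
    qed
    then have "\<bar>a\<bar> = 1 \<or> \<bar>a^2 - d^2\<bar> = 1"
      using W only_two by (intro coprime_only_two_divides) auto
    then show False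
    proof
      assume "\<bar>a\<bar> = 1"
      have d2: "d^2 > 1" using d False by (simp add: one_less_power)
      have "a \<noteq> 1"
      proof
        assume "a = 1"
        then have "t^2 = 1 - d^2" using t by simp
        then show False using d2 zero_le_power2[of t] by linarith
      qed
      then have "a = -1" using \<open>\<bar>a\<bar> = 1\<close> by linarith
      then have "d^2 - t^2 = 1" using t by simp
      then show False using square_diff_one[of d t] t W by simp
    next
      assume "\<bar>a^2 - d^2\<bar> = 1"
      then have "a^2 - d^2 = 1 \<or> d^2 - a^2 = 1" by linarith
      then show False using square_diff_one[of a d] square_diff_one[of d a] d W by auto
    qed
  qed
qed

section \<open>Arithmetic of points of E_N and of the doubling map\<close>

text \<open>A point with y = 0 has order two, so non-torsion points have y \<noteq> 0.\<close>
lemma non_torsion_imp_y_nonzero: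
  assumes "\<not> torsion N (Pt x y)" shows "y \<noteq> 0"
proof
  assume "y = 0"
  then have "ec_mult N 2 (Pt x y) = Inf" by (simp add: ec_mult_def numeral_2_eq_2)
  then show False using assms unfolding torsion_def by (metis one_le_numeral)
qed

lemma double_xcoord:
  assumes curve: "y^2 = x^3 - of_int N * x" and y: "y \<noteq> 0"
  shows "xcoord (ec_add N (Pt x y) (Pt x y)) * (4 * y^2) = (x^2 + of_int N)^2"
proof -
  have "xcoord (ec_add N (Pt x y) (Pt x y)) = ((3 * x^2 - of_int N) / (2 * y))^2 - x - x"
    using y by (simp add: Let_def)
  then have "xcoord (ec_add N (Pt x y) (Pt x y)) * (4 * y^2) = (3 * x^2 - of_int N)^2 - 8 * x * y^2"
    using y by (simp add: field_simps power2_eq_square)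
  also have "\<dots> = (x^2 + of_int N)^2"
    unfolding curve by (simp add: power2_eq_square power3_eq_cube algebra_simps)
  finally show ?thesis .
qed

lemma curve_cleared:
  assumes curve: "y^2 = x^3 - of_int N * x" and xd: "x * of_int d = of_int a"
  shows "y^2 * of_int d ^ 3 = (of_int (a * (a^2 - N*d^2)) :: rat)"
proof -
  have "y^2 * of_int d ^ 3 = (x * of_int d)^3 - of_int N * (x * of_int d) * of_int d ^ 2"
    unfolding curve by (simp add: algebra_simps power3_eq_cube power2_eq_square)
  then show ?thesis unfolding xd by (simp add: algebra_simps power3_eq_cube power2_eq_square)
qed

text \<open>The integral data attached to P = (a/d, y) with y \<noteq> 0: W \<noteq> 0 and W d is a square,
  since y d^2 is a rational number whose square is the integer W d.\<close>
lemma integral_data: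
  fixes x y :: rat and N a d :: int
  assumes curve: "y^2 = x^3 - of_int N * x" and y: "y \<noteq> 0"
    and xd: "x * of_int d = of_int a" and d: "d > 0"
  shows "\<exists>C. a * (a^2 - N*d^2) \<noteq> 0 \<and> a * (a^2 - N*d^2) * d = C^2"
proof -
  have yd: "y^2 * of_int d ^ 3 = of_int (a * (a^2 - N*d^2))" using curve_cleared[OF curve xd] .
  have W: "a * (a^2 - N*d^2) \<noteq> 0"
  proof
    assume "a * (a^2 - N*d^2) = 0"
    then have "y^2 * of_int d ^ 3 = 0" using yd by (metis of_int_0)
    then show False using y d by simp
  qed
  have "(y * of_int d ^ 2)^2 = (y^2 * of_int d ^ 3) * of_int d"
    by (simp add: power2_eq_square power3_eq_cube algebra_simps)
  also have "\<dots> = of_int (a * (a^2 - N*d^2) * d)" unfolding yd by simp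
  finally have ysq: "(y * of_int d ^ 2)^2 = of_int (a * (a^2 - N*d^2) * d)" .
  then obtain C where "y * of_int d ^ 2 = of_int C" using rat_square_of_int_imp_int by blast
  with ysq have "a * (a^2 - N*d^2) * d = C^2" by (metis of_int_eq_iff of_int_power)
  with W show ?thesis by blast
qed

lemma double_xcoord_integral:
  assumes curve: "y^2 = x^3 - of_int N * x" and y: "y \<noteq> 0" and xd: "x * of_int d = of_int a"
  shows "xcoord (ec_add N (Pt x y) (Pt x y)) * of_int (4 * d * (a * (a^2 - N*d^2)))
           = of_int ((a^2 + N*d^2)^2)"
proof -
  have "(of_int (4 * d * (a * (a^2 - N*d^2))) :: rat) = 4 * of_int d * of_int (a * (a^2 - N*d^2))"
    by (simp only: of_int_mult of_int_numeral)
  also have "\<dots> = 4 * of_int d * (y^2 * of_int d ^ 3)" by (simp only: curve_cleared[OF curve xd])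
  also have "\<dots> = 4 * y^2 * of_int d ^ 4" by (simp add: eval_nat_numeral algebra_simps)
  finally have V: "(of_int (4 * d * (a * (a^2 - N*d^2))) :: rat) = 4 * y^2 * of_int d ^ 4" .
  have "xcoord (ec_add N (Pt x y) (Pt x y)) * of_int (4 * d * (a * (a^2 - N*d^2)))
               = xcoord (ec_add N (Pt x y) (Pt x y)) * (4 * y^2) * of_int d ^ 4"
    unfolding V by (simp only: mult.assoc)
  also have "\<dots> = (x^2 + of_int N)^2 * of_int d ^ 4" by (simp only: double_xcoord[OF curve y])
  also have "\<dots> = ((x * of_int d)^2 + of_int N * of_int d ^ 2)^2"
    by (simp add: algebra_simps power2_eq_square eval_nat_numeral)
  finally show ?thesis unfolding xd by simp
qed

lemma prime_dvd_denominator: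
  fixes X :: rat
  assumes XUV: "X * of_int V = of_int U" and q: "prime q" "q dvd V" "\<not> q dvd U"
  shows "q \<in> prime_factors (snd (quotient_of X))"
proof -
  obtain n D where qX: "quotient_of X = (n, D)" by (cases "quotient_of X")
  have D: "D > 0" and X: "X = of_int n / of_int D"
    using quotient_of_denom_pos[OF qX] quotient_of_div[OF qX] by auto
  have "rat_of_int (n * V) = rat_of_int (U * D)" using XUV X D by (simp add: field_simps)
  then have "n * V = U * D" by (simp only: of_int_eq_iff)
  then have "q dvd U * D" using q(2) by (metis dvd_mult)
  then have "q dvd D" using q prime_dvd_multD by blast
  then show ?thesis using q(1) D qX by (auto intro: prime_factorsI)
qed

text \<open>Exceptional primes divide 4dW but not (a^2 + N d^2)^2: a prime dividing both would divide
  a and d, or (for primes of W not dividing 2N) it would divide 2a^2 and hence a and d.\<close>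
lemma exceptional_prime_separates:
  fixes N a d q :: int
  assumes cop: "coprime a d" and qE: "q \<in> exceptional_primes N a d"
  shows "q dvd 4 * d * (a * (a^2 - N*d^2))" "\<not> q dvd (a^2 + N*d^2)^2"
proof -
  have q: "prime q" using qE by (simp add: exceptional_primes_def)
  show "q dvd 4 * d * (a * (a^2 - N*d^2))" using qE by (auto simp: exceptional_primes_def)
  show "\<not> q dvd (a^2 + N*d^2)^2"
  proof
    assume "q dvd (a^2 + N*d^2)^2"
    then have T: "q dvd a^2 + N*d^2" using q prime_dvd_power_iff[of q 2] by simp
    have not_a: "\<not> q dvd a" if "q dvd d \<or> \<not> q dvd N"
    proof
      assume qa: "q dvd a"
      then have "q dvd (a^2 + N*d^2) - a^2" using T by (intro dvd_diff) (auto simp: power2_eq_square)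
      then have "q dvd N \<or> q dvd d" using q prime_dvd_multD prime_dvd_power_iff[of q 2 d] by auto
      then have "q dvd d" using that by blast
      then show False using coprime_no_common_prime[OF cop q qa] by simp
    qed
    consider "q dvd d" | "q dvd a * (a^2 - N*d^2)" "\<not> q dvd 2*N"
      using qE by (auto simp: exceptional_primes_def)
    then show False
    proof cases
      case 1
      then have "q dvd (a^2 + N*d^2) - N*d^2" using T by (intro dvd_diff) (auto simp: power2_eq_square)
      then have "q dvd a" using q prime_dvd_power_iff[of q 2 a] by simp
      then show False using not_a 1 by blast
    next
      case 2
      then have qN: "\<not> q dvd N" "\<not> q dvd 2" by (auto dest: dvd_mult dvd_mult2)
      then have "q dvd a^2 - N*d^2" using 2 not_a prime_dvd_multD[OF q] by blast
      then have "q dvd (a^2 - N*d^2) + (a^2 + N*d^2)" using T by (rule dvd_add)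
      then have "q dvd 2 * a^2" by (simp add: algebra_simps)
      then have "q dvd a" using q qN(2) prime_dvd_multD prime_dvd_power_iff[of q 2 a] by auto
      then show False using not_a qN(1) by blast
    qed
  qed
qed

lemma exceptional_primes_unique:
  assumes curve: "y^2 = x^3 - of_int N * x" and y: "y \<noteq> 0"
    and qx: "quotient_of x = (a, d)" and len: "ec_length (ec_add N (Pt x y) (Pt x y)) \<le> 1"
  shows "\<forall>p\<in>exceptional_primes N a d. \<forall>q\<in>exceptional_primes N a d. p = q"
proof -
  define S where "S = prime_factors (snd (quotient_of (xcoord (ec_add N (Pt x y) (Pt x y)))))"
  have cop: "coprime a d" and xd: "x * of_int d = of_int a"
    using quotient_of_coprime[OF qx] quotient_of_div[OF qx] quotient_of_denom_pos[OF qx] by auto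
  have "exceptional_primes N a d \<subseteq> S"
  proof
    fix q assume qE: "q \<in> exceptional_primes N a d"
    then have "prime q" by (simp add: exceptional_primes_def)
    then show "q \<in> S"
      unfolding S_def using prime_dvd_denominator[OF double_xcoord_integral[OF curve y xd]]
        exceptional_prime_separates[OF cop qE] by blast
  qed
  moreover have "\<forall>p\<in>S. \<forall>q\<in>S. p = q"
    using len card_le_Suc0_iff_eq[of S] unfolding S_def ec_length_def by simp
  ultimately show ?thesis by blast
qed

text \<open>From the bound on M = max(|a^2 - N d^2|, N d^2, a^2): |x| \<le> a^2 \<le> M and
  |x(2P)| \<le> (a^2 + N d^2)^2 \<le> 4 M^2.\<close>
lemma xcoord_bounds:
  fixes x X :: rat and a d N V :: int and B :: real
  assumes xd: "x * of_int d = of_int a" and d: "d > 0" and N: "N > 0"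
    and XUV: "X * of_int V = of_int ((a^2 + N*d^2)^2)" and V: "V \<noteq> 0"
    and M: "real_of_int (max \<bar>a^2 - N*d^2\<bar> (max \<bar>N*d^2\<bar> \<bar>a^2\<bar>)) \<le> B"
  shows "\<bar>real_of_rat x\<bar> \<le> B" "\<bar>real_of_rat X\<bar> \<le> 4 * B^2"
proof -
  have "a^2 \<le> max \<bar>a^2 - N*d^2\<bar> (max \<bar>N*d^2\<bar> \<bar>a^2\<bar>)"
    and "N*d^2 \<le> max \<bar>a^2 - N*d^2\<bar> (max \<bar>N*d^2\<bar> \<bar>a^2\<bar>)" by auto
  then have Ma: "real_of_int (a^2) \<le> B" and Mb: "real_of_int (N*d^2) \<le> B"
    using M by (meson of_int_le_iff order_trans)+
  have "x = of_int a / of_int d" using xd d by (simp add: eq_divide_eq)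
  then have "\<bar>real_of_rat x\<bar> = \<bar>real_of_int a\<bar> / real_of_int d" using d by (simp add: of_rat_divide)
  also have "\<dots> \<le> \<bar>real_of_int a\<bar>" using d by (simp add: divide_le_eq mult_le_cancel_left1)
  also have "\<dots> \<le> real_of_int (a^2)" using abs_le_square_int[of a] by linarith
  finally show "\<bar>real_of_rat x\<bar> \<le> B" using Ma by linarith
  have "real_of_rat X * real_of_int V = real_of_int ((a^2 + N*d^2)^2)"
    using arg_cong[OF XUV, of real_of_rat] by (simp only: of_rat_mult of_rat_of_int_eq)
  then have "\<bar>real_of_rat X\<bar> * \<bar>real_of_int V\<bar> = (real_of_int (a^2) + real_of_int (N*d^2))^2"
    by (metis abs_mult abs_power2 of_int_add of_int_power)
  moreover have "\<bar>real_of_rat X\<bar> \<le> \<bar>real_of_rat X\<bar> * \<bar>real_of_int V\<bar>"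
  proof -
    have "\<bar>real_of_int V\<bar> \<ge> 1" using V by linarith
    then show ?thesis by (simp add: mult_le_cancel_left1)
  qed
  moreover have "(real_of_int (a^2) + real_of_int (N*d^2))^2 \<le> (2 * B)^2"
    using Ma Mb N by (intro power_mono) auto
  ultimately show "\<bar>real_of_rat X\<bar> \<le> 4 * B^2" by (simp add: power_mult_distrib)
qed

lemma point_height_bound:
  assumes K: "abc_gcd_constant K" and N: "N > 0"
    and curve: "on_curve N (Pt x y)" and nt: "\<not> torsion N (Pt x y)"
    and len: "ec_length (ec_add N (Pt x y) (Pt x y)) \<le> 1"
  shows "N \<ge> 2"
    "\<bar>real_of_rat x\<bar> \<le> 4 * (64 * K^4)^2 * real_of_int N ^ 20"
    "\<bar>real_of_rat (xcoord (ec_add N (Pt x y) (Pt x y)))\<bar> \<le> 4 * (64 * K^4)^2 * real_of_int N ^ 20"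
proof -
  have eq: "y^2 = x^3 - of_int N * x" using curve by simp
  have y: "y \<noteq> 0" using non_torsion_imp_y_nonzero[OF nt] .
  obtain a d where qx: "quotient_of x = (a, d)" by (cases "quotient_of x")
  have d: "d > 0" and cop: "coprime a d" and xd: "x * of_int d = of_int a"
    using quotient_of_denom_pos[OF qx] quotient_of_coprime[OF qx] quotient_of_div[OF qx] by auto
  obtain C where W: "a * (a^2 - N*d^2) \<noteq> 0" and sq: "a * (a^2 - N*d^2) * d = C^2"
    using integral_data[OF eq y xd d] by blast
  have unique: "\<forall>p\<in>exceptional_primes N a d. \<forall>q\<in>exceptional_primes N a d. p = q"
    using exceptional_primes_unique[OF eq y qx len] .
  show "N \<ge> 2"
  proof (rule ccontr)
    assume "\<not> N \<ge> 2"
    then have "N = 1" using N by simp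
    then show False using no_exceptional_data_N1[OF d cop _ _ unique[unfolded \<open>N = 1\<close>], where C = C] W sq by simp
  qed
  define B where "B = 64 * K^4 * real_of_int N ^ 10"
  have M: "real_of_int (max \<bar>a^2 - N*d^2\<bar> (max \<bar>N*d^2\<bar> \<bar>a^2\<bar>)) \<le> B"
    unfolding B_def using abc_height_bound[OF K N d cop W sq unique] .
  have "K^4 \<ge> 1" "real_of_int N ^ 10 \<ge> 1"
    using abc_gcd_constant_ge_1[OF K] N by (simp_all add: one_le_power)
  then have "1 * 1 \<le> K^4 * real_of_int N ^ 10" by (intro mult_mono) auto
  then have B1: "B \<ge> 1" unfolding B_def by simp
  have "4 * B^2 = 4 * (64 * K^4)^2 * real_of_int N ^ 20" unfolding B_def by algebra
  moreover have "B \<le> 4 * B^2" using B1 by (simp add: power2_eq_square)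
  moreover note xcoord_bounds[OF xd d N double_xcoord_integral[OF eq y xd] _ M]
  ultimately show "\<bar>real_of_rat x\<bar> \<le> 4 * (64 * K^4)^2 * real_of_int N ^ 20"
    "\<bar>real_of_rat (xcoord (ec_add N (Pt x y) (Pt x y)))\<bar> \<le> 4 * (64 * K^4)^2 * real_of_int N ^ 20"
    using W d by auto
qed

lemma ln_le_of_poly_bound:
  fixes A n z :: real and k :: nat
  assumes A: "A \<ge> 1" and n: "n \<ge> 2" and z0: "0 \<le> z" and z: "z \<le> A * n ^ k"
  shows "ln z \<le> (k + ln A / ln 2) * ln n"
proof (cases "z = 0")
  case True
  then show ?thesis using A n by (simp add: zero_le_mult_iff)
next
  case False
  have "ln A = ln A / ln 2 * ln 2" by simp
  also have "\<dots> \<le> ln A / ln 2 * ln n" using A n by (intro mult_left_mono) auto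
  finally have lnA: "ln A \<le> ln A / ln 2 * ln n" .
  have "ln z \<le> ln (A * n ^ k)" using False z0 z by simp
  also have "\<dots> = ln A + k * ln n" using A n by (simp add: ln_mult ln_realpow)
  also have "\<dots> \<le> (k + ln A / ln 2) * ln n" using lnA by (simp add: algebra_simps)
  finally show ?thesis .
qed

theorem lemma2p1:
  assumes "ABC_conjecture"
  shows "\<exists>c::real. c > 0 \<and>
    (\<forall>(N::int) (P::ecpt). N > 0 \<and> on_curve N P \<and> P \<noteq> Inf \<and> \<not> torsion N P \<and>
        ec_length (ec_add N P P) \<le> 1 \<longrightarrow>
          ln \<bar>real_of_rat (xcoord P)\<bar> \<le> c * ln (real_of_int N) \<and>
          ln \<bar>real_of_rat (xcoord (ec_add N P P))\<bar> \<le> c * ln (real_of_int N))"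
proof -
  obtain K where K: "abc_gcd_constant K" using abc_gcd_constant_exists[OF assms] .
  define A where "A = 4 * (64 * K^4)^2"
  have A: "A \<ge> 1"
    using one_le_power[OF abc_gcd_constant_ge_1[OF K], of 8] unfolding A_def by simp
  define c where "c = 20 + ln A / ln 2"
  have "ln A / ln 2 \<ge> 0" using A by simp
  then have "c > 0" unfolding c_def by linarith
  moreover have "ln \<bar>real_of_rat (xcoord P)\<bar> \<le> c * ln (real_of_int N) \<and>
                 ln \<bar>real_of_rat (xcoord (ec_add N P P))\<bar> \<le> c * ln (real_of_int N)"
    if "N > 0" "on_curve N P" "P \<noteq> Inf" "\<not> torsion N P" "ec_length (ec_add N P P) \<le> 1" for N P
  proof -
    obtain x y where P: "P = Pt x y" using \<open>P \<noteq> Inf\<close> by (cases P) auto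
    note bound = point_height_bound[OF K, of N x y, folded A_def, unfolded P[symmetric]]
    have "real_of_int N \<ge> 2" using bound(1) that by simp
    then show ?thesis
      using ln_le_of_poly_bound[OF A, of "real_of_int N" _ 20] bound(2,3) that P
      unfolding c_def by simp
  qed
  ultimately show ?thesis by blast
qed

end
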